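(* Let $q$ be a prime power, $n\ge1$, and let $f(x)\neq x-1$ be a primitive polynomial of degree $n$ over $\mathbb{F}_q$. Then the polynomial $$F(x)=\frac{f\big(x^{q^n}+x^{q^n-1}\big)}{f(x+1)}$$ of degree $n(q^n-1)$ is irreducible over $\mathbb{F}_q$.
   Context: A primitive polynomial of degree $n$ over $\mathbb{F}_q$ is a monic irreducible polynomial of degree $n$ whose roots generate the multiplicative group $\mathbb{F}_{q^n}^*$. *)

theory Defs
  imports "HOL-Computational_Algebra.Computational_Algebra"
begin

text \<open>A primitive polynomial of degree n over the finite field 'a (with q = card (UNIV :: 'a set)):
  a monic irreducible polynomial of degree n such that its root, i.e. the class of X in
  the field 'a[X]/(f) (a copy of F_{q^n}), has multiplicative order q^n - 1, i.e. generates
  the multiplicative group. The order of [X] in 'a[X]/(f) is the least k > 0 with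
  f dvd X^k - 1.\<close>
definition primitive_poly :: "nat \<Rightarrow> 'a::{finite,field} poly \<Rightarrow> bool" where
  "primitive_poly n f \<longleftrightarrow>
     lead_coeff f = 1 \<and> degree f = n \<and> irreducible f \<and>
     f dvd [:0, 1:] ^ (card (UNIV :: 'a set) ^ n - 1) - 1 \<and>
     (\<forall>k. 0 < k \<and> k < card (UNIV :: 'a set) ^ n - 1 \<longrightarrow> \<not> f dvd [:0, 1:] ^ k - 1)"

end

theory Submission
  imports Defs "HOL-Library.Cardinality" "HOL-Number_Theory.Cong" "HOL-Algebra.Sylow"
begin

text \<open>
  Write \<open>Q = q\<^sup>n\<close>, \<open>m = Q - 1\<close>, \<open>u = x\<^sup>Q + x\<^sup>m = x\<^sup>m(x + 1)\<close>, \<open>P = f(u)\<close> and \<open>G = f(x + 1)\<close>.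
  Let \<open>h\<close> be an irreducible factor of \<open>P\<close> of degree \<open>d\<close>. In the residue field \<open>F\<^sub>q[x]/(h)\<close>,
  which has \<open>q\<^sup>d\<close> elements, \<open>u\<close> is a root of \<open>f\<close> and therefore has multiplicative order exactly
  \<open>m\<close>; so \<open>F\<^sub>Q\<close> embeds into it and \<open>d = nk\<close>. The element \<open>w = u - x - 1 = (x + 1)(x\<^sup>m - 1)\<close>
  satisfies \<open>w\<^sup>Q x u = w x\<^sup>Q\<close>, so \<open>w/x\<close> is divided by \<open>u\<close> under each application of the
  Frobenius \<open>z \<mapsto> z\<^sup>Q\<close>. Applying it \<open>k\<close> times, which is the identity, gives \<open>u\<^sup>k = 1\<close> when
  \<open>h\<close> does not divide \<open>w\<close>, i.e.\ when \<open>h\<close> does not divide \<open>G\<close>; hence \<open>m\<close> divides \<open>k\<close> and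
  \<open>d \<ge> nm = degree (P div G)\<close>. Finally \<open>G\<close> divides \<open>P\<close> and \<open>P\<close> is squarefree (it divides
  \<open>u\<^sup>m - 1\<close>, and \<open>m = -1\<close> in \<open>F\<^sub>q\<close>), so no irreducible factor of \<open>P div G\<close> divides \<open>G\<close> and
  \<open>P div G\<close> is irreducible.
\<close>

section \<open>Finite fields\<close>

lemma prime_CHAR_finite_field: "prime CHAR('a::{finite,field})"
  by (intro prime_CHAR_semidom finite_imp_CHAR_pos) simp

lemma two_le_card_finite_field: "2 \<le> CARD('a::{finite,field})"
  using card_mono[of "UNIV :: 'a set" "{0, 1}"] by simp

lemma two_le_card_power_finite_field:
  assumes "k \<ge> 1"
  shows "2 \<le> CARD('a::{finite,field}) ^ k"
  using power_increasing[OF assms, of "CARD('a)"] two_le_card_finite_field[where 'a='a]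
  by simp

lemma prime_dvd_card_finite_field_imp_eq_CHAR:
  assumes l: "prime l" "l dvd CARD('a::{finite,field})"
  shows "l = CHAR('a)"
proof (rule ccontr)
  assume "l \<noteq> CHAR('a)"
  hence l_nonzero: "of_nat l \<noteq> (0::'a)"
    using l(1) prime_CHAR_finite_field[where 'a='a]
    by (auto simp: of_nat_eq_0_iff_char_dvd dest: primes_dvd_imp_eq)
  define A :: "'a monoid" where "A = \<lparr>carrier = UNIV :: 'a set, monoid.mult = (+), one = 0\<rparr>"
  have "group A"
    unfolding A_def by (rule groupI) (auto simp: add.assoc intro: exI[of _ "- _"])
  moreover have "order A = l ^ 1 * (CARD('a) div l)"
    using l(2) by (simp add: order_def A_def)
  ultimately obtain H where H: "subgroup H A" "card H = l"
    using sylow_thm[OF l(1)] by (fastforce simp: A_def)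
  have H_add: "x + y \<in> H" if "x \<in> H" "y \<in> H" for x y
    using subgroup.m_closed[OF H(1) that] by (simp add: A_def)
  have "x = 0" if x: "x \<in> H" for x
  proof -
    \<comment> \<open>translation by \<open>x\<close> permutes \<open>H\<close>, so it leaves \<open>\<Sum>H\<close> unchanged\<close>
    have "(\<lambda>y. x + y) ` H = H"
      by (rule endo_inj_surj) (auto intro: H_add x inj_onI)
    hence "\<Sum>H = (\<Sum>y\<in>H. x + y)"
      by (metis add_left_imp_eq inj_onI sum.reindex_cong)
    hence "of_nat l * x = 0" using H(2) by (simp add: sum.distrib)
    with l_nonzero show "x = 0" by simp
  qed
  hence "card H \<le> card {0::'a}" by (intro card_mono) auto
  with H(2) prime_gt_1_nat[OF l(1)] show False by simp
qed

lemma card_finite_field_eq_CHAR_power: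
  "\<exists>r. CARD('a::{finite,field}) = CHAR('a) ^ r"
proof -
  let ?p = "CHAR('a)" and ?q = "CARD('a)"
  define c where "c = ?q div ?p ^ multiplicity ?p ?q"
  have q_eq: "?q = ?p ^ multiplicity ?p ?q * c"
    unfolding c_def using multiplicity_dvd[of ?p ?q] by simp
  have "c = 1"
  proof (rule ccontr)
    assume "c \<noteq> 1"
    moreover have "c \<noteq> 0" using q_eq by (metis card_0_eq finite UNIV_not_empty mult_0_right)
    ultimately obtain l where "prime l" "l dvd c" using prime_factor_nat by blast
    moreover from this have "l = ?p"
      using q_eq by (metis dvd_mult prime_dvd_card_finite_field_imp_eq_CHAR)
    ultimately show False using multiplicity_decompose[where p = ?p and x = ?q] by (simp add: c_def)
  qed
  with q_eq show ?thesis by auto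
qed

lemma of_nat_card_finite_field: "of_nat (CARD('a)) = (0::'a::{finite,field})"
proof -
  obtain r where r: "CARD('a) = CHAR('a) ^ r"
    using card_finite_field_eq_CHAR_power by blast
  with two_le_card_finite_field[where 'a='a] have "r \<noteq> 0" by (intro notI) simp
  with r show ?thesis by (simp add: of_nat_eq_0_iff_char_dvd)
qed

lemma poly_add_power_card_power:
  fixes A B :: "'a::{finite,field} poly"
  shows "(A + B) ^ (CARD('a) ^ j) = A ^ (CARD('a) ^ j) + B ^ (CARD('a) ^ j)"
proof -
  obtain r where "CARD('a) = CHAR('a) ^ r"
    using card_finite_field_eq_CHAR_power by blast
  then show ?thesis
    using prime_CHAR_finite_field[where 'a='a]
    by (intro freshmans_dream'[where n = "r * j"]) (simp_all add: power_mult)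
qed

lemma poly_diff_power_card_power:
  fixes A B :: "'a::{finite,field} poly"
  shows "(A - B) ^ (CARD('a) ^ j) = A ^ (CARD('a) ^ j) - B ^ (CARD('a) ^ j)"
  using poly_add_power_card_power[of "A - B" B j] by (simp add: eq_diff_eq)

lemma dvd_if_dvd_prime_elem_mult:
  fixes p a b :: "'a::idom"
  assumes p: "prime_elem p" and "\<not> p dvd a" and "a dvd p * b"
  shows "a dvd b"
proof -
  obtain c where c: "p * b = a * c" using assms(3) by blast
  hence "p dvd c" using assms(1,2) by (metis dvd_triv_left prime_elem_dvd_mult_iff)
  then obtain c' where "c = p * c'" by blast
  with c p have "b = a * c'" by (simp add: prime_elem_def mult.left_commute)
  then show ?thesis by simp
qed

lemma cong_mult_cancel_prime_elem:
  fixes p a b c :: "'a::unique_euclidean_ring"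
  assumes "prime_elem p" and "\<not> p dvd c" and "[c * a = c * b] (mod p)"
  shows "[a = b] (mod p)"
  using assms by (simp add: cong_iff_dvd_diff prime_elem_dvd_mult_iff flip: right_diff_distrib)

lemma cong_power_power_gcd:
  fixes u h :: "'a::unique_euclidean_semiring"
  assumes "a > 0" and a: "[u ^ (q ^ a) = u] (mod h)" and b: "[u ^ (q ^ b) = u] (mod h)"
  shows "[u ^ (q ^ gcd a b) = u] (mod h)"
proof -
  have iterate: "[u ^ (q ^ (i * s)) = u] (mod h)" if "[u ^ (q ^ i) = u] (mod h)" for i s
  proof (induction s)
    case (Suc s)
    have "u ^ (q ^ (i * Suc s)) = (u ^ (q ^ (i * s))) ^ (q ^ i)"
      by (simp add: power_add power_mult[symmetric] mult.commute)
    also have "[\<dots> = u ^ (q ^ i)] (mod h)" by (rule cong_pow[OF Suc.IH])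
    finally show ?case using that by (rule cong_trans)
  qed simp
  obtain x y where xy: "a * x = b * y + gcd a b" using bezout_nat[of a b] \<open>a > 0\<close> by auto
  have "[u = u ^ (q ^ (a * x))] (mod h)" using iterate[OF a] by (rule cong_sym)
  also have "u ^ (q ^ (a * x)) = (u ^ (q ^ (b * y))) ^ (q ^ gcd a b)"
    by (simp add: xy power_add power_mult[symmetric])
  also have "[\<dots> = u ^ (q ^ gcd a b)] (mod h)" by (rule cong_pow[OF iterate[OF b]])
  finally show ?thesis by (rule cong_sym)
qed

lemma dvd_if_cong_power_eq_1:
  fixes u h :: "'a::unique_euclidean_semiring"
  assumes "m > 0" and "[u ^ m = 1] (mod h)" and "[u ^ k = 1] (mod h)"
    and "\<And>j. 0 < j \<Longrightarrow> j < m \<Longrightarrow> \<not> [u ^ j = 1] (mod h)"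
  shows "m dvd k"
proof -
  have "u ^ k = (u ^ m) ^ (k div m) * u ^ (k mod m)"
    by (simp flip: power_mult power_add)
  moreover have "[(u ^ m) ^ (k div m) * u ^ (k mod m) = 1 ^ (k div m) * u ^ (k mod m)] (mod h)"
    using cong_mult[OF cong_pow[OF assms(2)] cong_refl] .
  ultimately have "[u ^ k = u ^ (k mod m)] (mod h)" by simp
  hence "[u ^ (k mod m) = 1] (mod h)" using cong_trans[OF cong_sym assms(3)] by blast
  with assms(1) assms(4)[of "k mod m"] show ?thesis by (auto simp: mod_eq_0_iff_dvd[symmetric])
qed

lemma is_unit_if_dvd_power_minus_1_and_power:
  fixes c z :: "'a::unique_euclidean_ring"
  assumes "m \<ge> 1" and "c dvd z ^ m - 1" and "c dvd z ^ j"
  shows "is_unit c"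
proof -
  have "[(z ^ m) ^ j = 1 ^ j] (mod c)"
    by (rule cong_pow) (simp add: cong_iff_dvd_diff assms(2))
  hence "[(z ^ j) ^ m = 1] (mod c)" by (simp flip: power_mult add: mult.commute)
  moreover have "[(z ^ j) ^ m = 0 ^ m] (mod c)"
    by (rule cong_pow) (simp add: cong_0_iff assms(3))
  hence "[(z ^ j) ^ m = 0] (mod c)" using assms(1) by (simp add: power_0_left)
  ultimately have "[1 = 0] (mod c)" using cong_trans[OF cong_sym] by blast
  then show ?thesis by (simp add: cong_iff_dvd_diff)
qed

text \<open>With \<open>\<sigma> z = z\<^sup>Q\<close> the hypothesis reads \<open>\<sigma>(a/x) = (a/x)/u\<close>; as \<open>\<sigma>\<close> fixes \<open>u\<close>,
  \<open>\<sigma>\<^sup>k(a/x) = (a/x)/u\<^sup>k\<close>.\<close>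
lemma cong_twisted_power_iterate:
  fixes a x u h :: "'a::unique_euclidean_ring"
  assumes h: "prime_elem h" "\<not> h dvd x" and u: "[u ^ Q = u] (mod h)"
    and base: "[a ^ Q * x * u = a * x ^ Q] (mod h)"
  shows "[a ^ (Q ^ k) * x * u ^ k = a * x ^ (Q ^ k)] (mod h)"
proof (induction k)
  case (Suc k)
  let ?A = "a ^ (Q ^ Suc k)" and ?X = "x ^ (Q ^ Suc k)"
  have "[(a ^ (Q ^ k) * x * u ^ k) ^ Q = (a * x ^ (Q ^ k)) ^ Q] (mod h)"
    by (rule cong_pow[OF Suc.IH])
  moreover have "(z ^ k) ^ Q = (z ^ Q) ^ k" "(z ^ (Q ^ k)) ^ Q = z ^ (Q ^ Suc k)" for z :: 'a
    by (simp_all flip: power_mult add: mult.commute)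
  ultimately have "[?A * x ^ Q * (u ^ Q) ^ k = a ^ Q * ?X] (mod h)"
    by (simp add: power_mult_distrib)
  moreover have "[?A * x ^ Q * (u ^ Q) ^ k = ?A * x ^ Q * u ^ k] (mod h)"
    by (intro cong_mult cong_refl cong_pow u)
  ultimately have step: "[?A * x ^ Q * u ^ k = a ^ Q * ?X] (mod h)"
    using cong_trans[OF cong_sym] by blast
  have "x ^ Q * (?A * x * u ^ Suc k) = (?A * x ^ Q * u ^ k) * (x * u)" by (simp add: mult_ac)
  also have "[\<dots> = (a ^ Q * ?X) * (x * u)] (mod h)" by (intro cong_mult step cong_refl)
  also have "(a ^ Q * ?X) * (x * u) = (a ^ Q * x * u) * ?X" by (simp add: mult_ac)
  also have "[\<dots> = (a * x ^ Q) * ?X] (mod h)" by (intro cong_mult base cong_refl)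
  also have "(a * x ^ Q) * ?X = x ^ Q * (a * ?X)" by (simp add: mult_ac)
  finally show ?case
    using cong_mult_cancel_prime_elem[OF h(1)] h prime_elem_dvd_power by blast
qed simp

lemma one_le_degree_iff_not_unit:
  fixes p :: "'a::field poly"
  assumes "p \<noteq> 0"
  shows "1 \<le> degree p \<longleftrightarrow> \<not> is_unit p"
  using is_unit_iff_degree[OF assms] by linarith

lemma degree_pos_if_irreducible:
  fixes h :: "'a::field poly"
  assumes "irreducible h"
  shows "degree h \<ge> 1"
  using assms one_le_degree_iff_not_unit[of h] by (auto simp: irreducible_def)

lemma irreducible_factor_exists:
  fixes a :: "'a::field poly"
  assumes "degree a \<ge> 1"
  shows "\<exists>h. irreducible h \<and> h dvd a"
  using assms
proof (induction "degree a" arbitrary: a rule: less_induct)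
  case less
  show ?case
  proof (cases "irreducible a")
    case False
    moreover have "a \<noteq> 0" using less.prems by auto
    moreover have "\<not> is_unit a" using less.prems one_le_degree_iff_not_unit[OF \<open>a \<noteq> 0\<close>] by simp
    ultimately obtain b c where bc: "a = b * c" "\<not> is_unit b" "\<not> is_unit c"
      by (auto simp: irreducible_def)
    hence "b \<noteq> 0" "c \<noteq> 0" using \<open>a \<noteq> 0\<close> by auto
    hence "degree b \<ge> 1" "degree c \<ge> 1" using bc(2,3) one_le_degree_iff_not_unit by auto
    hence "degree b < degree a" using bc(1) \<open>b \<noteq> 0\<close> \<open>c \<noteq> 0\<close> by (simp add: degree_mult_eq)
    with \<open>degree b \<ge> 1\<close> obtain h where "irreducible h" "h dvd b" using less.hyps by blast
    with bc(1) show ?thesis by auto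
  qed auto
qed

lemma irreducible_if_irreducible_factors_have_full_degree:
  fixes F :: "'a::field poly"
  assumes "degree F \<ge> 1"
    and "\<And>h. irreducible h \<Longrightarrow> h dvd F \<Longrightarrow> degree F \<le> degree h"
  shows "irreducible F"
proof (rule irreducibleI)
  show "F \<noteq> 0" using assms(1) by auto
  then show "\<not> is_unit F" using assms(1) one_le_degree_iff_not_unit by auto
  fix a b assume F: "F = a * b"
  show "is_unit a \<or> is_unit b"
  proof (rule ccontr)
    assume "\<not> (is_unit a \<or> is_unit b)"
    moreover have "a \<noteq> 0" "b \<noteq> 0" using F \<open>F \<noteq> 0\<close> by auto
    ultimately have "degree a \<ge> 1" "degree b \<ge> 1" using one_le_degree_iff_not_unit by auto
    then obtain h where h: "irreducible h" "h dvd a" using irreducible_factor_exists by blast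
    have "degree h \<le> degree a" using h(2) \<open>a \<noteq> 0\<close> by (rule dvd_imp_degree_le)
    also have "degree a < degree F"
      using F \<open>a \<noteq> 0\<close> \<open>b \<noteq> 0\<close> \<open>degree b \<ge> 1\<close> by (simp add: degree_mult_eq)
    finally show False using assms(2)[OF h(1)] h(2) F by simp
  qed
qed

lemma squarefree_if_coprime_pderiv:
  fixes p :: "'a::field poly"
  assumes "coprime p (pderiv p)"
  shows "squarefree p"
proof (rule squarefreeI)
  fix x assume "x ^ 2 dvd p"
  then obtain k where "p = x ^ 2 * k" by (rule dvdE)
  hence p: "p = x * (x * k)" by (simp add: power2_eq_square mult.assoc)
  have "x dvd pderiv p"
    unfolding p by (simp add: pderiv_mult)
  with p show "is_unit x" using assms coprime_common_divisor by (metis dvd_triv_left)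
qed

lemma X_plus_1_eq: "[:0, 1:] + 1 = [:1, 1 :: 'a::comm_semiring_1:]"
  by (simp add: one_pCons)

lemma pcompose_X: "pcompose [:0, 1:] p = p"
  for p :: "'a::comm_semiring_1 poly"
  by (simp add: pcompose_pCons)

lemma pcompose_power: "pcompose (p ^ k) r = pcompose p r ^ k"
  for p r :: "'a::comm_semiring_1 poly"
  by (induction k) (simp_all add: pcompose_1 pcompose_mult)

lemma dvd_pcompose_diff: "(A - B) dvd pcompose p A - pcompose p B"
  for p A B :: "'a::comm_ring_1 poly"
proof (induction p)
  case (pCons a p)
  have "pcompose (pCons a p) A - pcompose (pCons a p) B
      = A * (pcompose p A - pcompose p B) + (A - B) * pcompose p B"
    by (simp add: pcompose_pCons algebra_simps)
  with pCons.IH show ?case by simp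
qed simp

lemma pcompose_dvd_pcompose: "p dvd g \<Longrightarrow> pcompose p A dvd pcompose g A"
  for p g A :: "'a::comm_semiring_1 poly"
  by (elim dvdE) (simp add: pcompose_mult)

section \<open>The residue field of an irreducible polynomial\<close>

lemma card_poly_degree_less:
  assumes "d \<ge> 1"
  shows "card {r :: 'a::{finite,zero} poly. degree r < d} = CARD('a) ^ d"
proof -
  let ?R = "{r :: 'a poly. degree r < d}" and ?L = "{xs :: 'a list. set xs \<subseteq> UNIV \<and> length xs = d}"
  have "bij_betw (\<lambda>r. map (coeff r) [0..<d]) ?R ?L"
  proof (rule bij_betw_byWitness[where f' = Poly])
    show "\<forall>r\<in>?R. Poly (map (coeff r) [0..<d]) = r"
      by (auto intro!: poly_eqI simp: nth_default_def coeff_eq_0)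
    show "\<forall>xs\<in>?L. map (coeff (Poly xs)) [0..<d] = xs"
      by (auto intro!: nth_equalityI simp: nth_default_def)
    have "degree (Poly xs) < d" if "length xs = d" for xs :: "'a list"
    proof -
      have "\<forall>i>d - 1. coeff (Poly xs) i = 0" using assms that by (auto simp: nth_default_def)
      with assms show ?thesis by (metis degree_le diff_less le_less_trans zero_less_one less_le_trans)
    qed
    then show "Poly ` ?L \<subseteq> ?R" by blast
  qed auto
  then have "card ?R = card ?L" by (rule bij_betw_same_card)
  also have "card ?L = CARD('a) ^ d" by (rule card_lists_length_eq) simp
  finally show ?thesis .
qed

lemma finite_poly_degree_less: "finite {r :: 'a::{finite,zero} poly. degree r < d}"
proof (cases "d = 0")
  case False
  then show ?thesis
    using card_poly_degree_less[of d, where 'a='a] by (intro card_ge_0_finite) simp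
qed simp

lemma mult_mod_permutes_nonzero_residues:
  fixes h c :: "'a::{finite,field} poly"
  assumes h: "irreducible h" and c: "\<not> h dvd c"
  defines "R \<equiv> {r. degree r < degree h} - {0}"
  shows "bij_betw (\<lambda>r. c * r mod h) R R"
proof -
  have h_prime: "prime_elem h" using h by (rule field_poly_irreducible_imp_prime)
  have "h \<noteq> 0" using h by auto
  have not_dvd_R: "\<not> h dvd r" if "r \<in> R" for r
    using that dvd_imp_degree_le[of h r] by (force simp: R_def)
  have into: "(\<lambda>r. c * r mod h) ` R \<subseteq> R"
  proof safe
    fix r assume r: "r \<in> R"
    have "\<not> h dvd c * r" using h_prime c not_dvd_R[OF r] by (simp add: prime_elem_dvd_mult_iff)
    then show "c * r mod h \<in> R"
      using degree_mod_less'[OF \<open>h \<noteq> 0\<close>] by (auto simp: R_def mod_eq_0_iff_dvd)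
  qed
  have inj: "inj_on (\<lambda>r. c * r mod h) R"
  proof (rule inj_onI)
    fix r s assume rs: "r \<in> R" "s \<in> R" "c * r mod h = c * s mod h"
    hence "h dvd c * (r - s)" by (simp add: mod_eq_dvd_iff right_diff_distrib)
    hence "h dvd r - s" using h_prime c by (simp add: prime_elem_dvd_mult_iff)
    moreover have "degree (r - s) < degree h"
      using rs(1,2) degree_diff_le_max[of r s] by (auto simp: R_def)
    ultimately show "r = s" using dvd_imp_degree_le[of h "r - s"] by force
  qed
  have "finite R" using finite_poly_degree_less by (simp add: R_def)
  with into inj show ?thesis by (simp add: bij_betw_def endo_inj_surj)
qed

text \<open>Fermat's little theorem in the residue field \<open>F\<^sub>q[x]/(h)\<close> of order \<open>q ^ degree h\<close>:
  comparing the products of the non-zero residues \<open>r\<close> and \<open>c r\<close>.\<close>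
lemma poly_cong_power_card_degree_minus_1:
  fixes h c :: "'a::{finite,field} poly"
  assumes h: "irreducible h" and c: "\<not> h dvd c"
  shows "[c ^ (CARD('a) ^ degree h - 1) = 1] (mod h)"
proof -
  define R where "R = {r :: 'a poly. degree r < degree h} - {0}"
  have h_prime: "prime_elem h" using h by (rule field_poly_irreducible_imp_prime)
  have fin_R: "finite R" using finite_poly_degree_less by (simp add: R_def)
  have card_R: "card R = CARD('a) ^ degree h - 1"
    using card_poly_degree_less[OF degree_pos_if_irreducible[OF h], where 'a='a]
      finite_poly_degree_less degree_pos_if_irreducible[OF h]
    by (simp add: R_def)
  have "\<Prod>R = (\<Prod>r\<in>R. c * r mod h)"
    using prod.reindex_bij_betw[OF mult_mod_permutes_nonzero_residues[OF h c], of "\<lambda>r. r"]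
    by (simp add: R_def)
  also have "[\<dots> = (\<Prod>r\<in>R. c * r)] (mod h)"
    by (intro cong_prod) (simp add: cong_def)
  also have "(\<Prod>r\<in>R. c * r) = c ^ card R * \<Prod>R" by (simp add: prod.distrib)
  finally have "[\<Prod>R * 1 = \<Prod>R * c ^ card R] (mod h)" by (simp add: mult.commute)
  moreover have "\<not> h dvd \<Prod>R"
  proof
    assume "h dvd \<Prod>R"
    then obtain r where "r \<in> R" "h dvd r"
      using fin_R by (auto simp: prod_unfold_prod_mset elim: prime_elem_dvd_prod_msetE[OF h_prime])
    then show False using dvd_imp_degree_le[of h r] by (force simp: R_def)
  qed
  ultimately have "[1 = c ^ card R] (mod h)" using cong_mult_cancel_prime_elem[OF h_prime] by blast
  then show ?thesis by (simp add: card_R cong_sym_eq)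
qed

lemma poly_cong_power_card_degree:
  fixes h c :: "'a::{finite,field} poly"
  assumes h: "irreducible h"
  shows "[c ^ (CARD('a) ^ degree h) = c] (mod h)"
proof (cases "h dvd c")
  case True
  moreover have "c dvd c ^ (CARD('a) ^ degree h)"
    by (simp add: finite_UNIV_card_ge_0)
  ultimately show ?thesis by (meson cong_iff_dvd_diff dvd_diff dvd_trans)
next
  case False
  have "CARD('a) ^ degree h = Suc (CARD('a) ^ degree h - 1)"
    using two_le_card_finite_field[where 'a='a] by simp
  hence "c ^ (CARD('a) ^ degree h) = c * c ^ (CARD('a) ^ degree h - 1)"
    by (metis power_Suc)
  also have "[\<dots> = c * 1] (mod h)"
    by (intro cong_mult cong_refl poly_cong_power_card_degree_minus_1 h False)
  finally show ?thesis by simp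
qed

text \<open>By Fermat, \<open>g\<close> is invertible modulo \<open>f\<close>; the relation \<open>f dvd g\<^sup>N - 1\<close> survives composition.\<close>
lemma is_unit_if_dvd_pcompose:
  fixes f g h \<beta> :: "'a::{finite,field} poly"
  assumes f: "irreducible f" "\<not> f dvd g"
    and h: "h dvd pcompose f \<beta>" "h dvd pcompose g \<beta>"
  shows "is_unit h"
proof -
  define N where "N = CARD('a) ^ degree f - 1"
  have "N > 0"
    using two_le_card_power_finite_field[OF degree_pos_if_irreducible[OF f(1)], where 'a='a]
    by (simp add: N_def)
  have "h dvd pcompose g \<beta> ^ N" using h(2) \<open>N > 0\<close> by (simp add: dvd_trans[OF _ dvd_power])
  moreover have "f dvd g ^ N - 1"
    using poly_cong_power_card_degree_minus_1[OF f] by (simp add: N_def cong_iff_dvd_diff)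
  hence "h dvd pcompose g \<beta> ^ N - 1"
    using h(1) pcompose_dvd_pcompose[of f "g ^ N - 1" \<beta>]
    by (simp add: pcompose_diff pcompose_power pcompose_1 dvd_trans)
  ultimately have "h dvd pcompose g \<beta> ^ N - (pcompose g \<beta> ^ N - 1)" by (rule dvd_diff)
  then show ?thesis by simp
qed

section \<open>The polynomial \<open>f(x\<^sup>Q + x\<^sup>m)\<close> for primitive \<open>f\<close>\<close>

locale primitive_poly_composition =
  fixes f :: "'a::{finite,field} poly" and n m :: nat
  assumes n_pos: "n \<ge> 1" and primitive: "primitive_poly n f" and f_ne: "f \<noteq> [:-1, 1:]"
  defines "m \<equiv> CARD('a) ^ n - 1"
begin

abbreviation u :: "'a poly" where "u \<equiv> monom 1 (CARD('a) ^ n) + monom 1 m"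
abbreviation P :: "'a poly" where "P \<equiv> pcompose f u"
abbreviation G :: "'a poly" where "G \<equiv> pcompose f [:1, 1:]"

lemma card_power_eq_Suc: "CARD('a) ^ n = Suc m"
  using two_le_card_power_finite_field[OF n_pos, where 'a='a] by (simp add: m_def)

lemma m_pos: "m \<ge> 1"
  using two_le_card_power_finite_field[OF n_pos, where 'a='a] by (simp add: m_def)

lemma lead_coeff_f: "lead_coeff f = 1"
  and degree_f: "degree f = n"
  and irreducible_f: "irreducible f"
  and f_dvd_X_power_m: "f dvd [:0, 1:] ^ m - 1"
  and f_not_dvd_X_power: "0 < k \<Longrightarrow> k < m \<Longrightarrow> \<not> f dvd [:0, 1:] ^ k - 1"
  using primitive by (auto simp: primitive_poly_def m_def)

lemma f_dvd_X_power_card_power: "f dvd [:0, 1:] ^ CARD('a) ^ n - [:0, 1:]"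
proof -
  have "y ^ Suc m - y = y * (y ^ m - 1)" for y :: "'a poly" by (simp add: algebra_simps)
  hence eq: "[:0, 1:] ^ CARD('a) ^ n - [:0, 1:] = [:0, 1:] * ([:0, 1:] ^ m - (1 :: 'a poly))"
    unfolding card_power_eq_Suc .
  show ?thesis unfolding eq by (rule dvd_mult[OF f_dvd_X_power_m])
qed

lemma poly_f_1: "poly f 1 \<noteq> 0"
proof
  assume "poly f 1 = 0"
  hence "[:-1, 1:] dvd f" by (simp add: dvd_iff_poly_eq_0)
  then obtain k where k: "f = [:-1, 1:] * k" by (elim dvdE)
  have "is_unit ([:-1, 1:] :: 'a poly) \<or> is_unit k" by (rule irreducibleD[OF irreducible_f k])
  hence "is_unit k" by (simp add: is_unit_poly_iff)
  then obtain c where "k = [:c:]" by (auto simp: is_unit_poly_iff)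
  with k lead_coeff_f f_ne show False by (cases "c = 0") (simp_all add: lead_coeff_mult)
qed

lemma u_eq: "u = [:0, 1:] ^ m * [:1, 1:]"
proof -
  have "y ^ Suc m + y ^ m = y ^ m * (y + 1)" for y :: "'a poly" by (simp add: algebra_simps)
  then show ?thesis unfolding monom_altdef smult_1_left card_power_eq_Suc X_plus_1_eq[symmetric] .
qed

lemma X_dvd_u: "[:0, 1:] dvd u"
  unfolding u_eq using m_pos by (intro dvd_mult2 dvd_power) simp

lemma X_plus_1_dvd_u: "[:0, 1:] + 1 dvd u"
  unfolding u_eq X_plus_1_eq by (rule dvd_triv_right)

lemma G_dvd_P: "G dvd P"
proof -
  let ?X = "[:0, 1:] :: 'a poly"
  have "pcompose (?X ^ CARD('a) ^ n - ?X) [:1, 1:] = (?X + 1) ^ CARD('a) ^ n - (?X + 1)"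
    by (simp only: pcompose_diff pcompose_power pcompose_X X_plus_1_eq)
  also have "\<dots> = ?X * (?X ^ m - 1)"
  proof -
    have "y ^ Suc m + 1 - (y + 1) = y * (y ^ m - 1)" for y :: "'a poly" by (simp add: algebra_simps)
    then show ?thesis unfolding poly_add_power_card_power power_one unfolding card_power_eq_Suc .
  qed
  finally have G_dvd: "G dvd ?X * (?X ^ m - 1)"
    using pcompose_dvd_pcompose[OF f_dvd_X_power_card_power, of "[:1, 1:]"] by simp
  have X_prime: "prime_elem ?X" by (simp add: prime_elem_linear_field_poly)
  have "\<not> ?X dvd G"
    using poly_f_1 by (simp add: dvd_iff_poly_eq_0 poly_pcompose)
  with X_prime have "G dvd ?X ^ m - 1" using G_dvd by (rule dvd_if_dvd_prime_elem_mult)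
  moreover have "u - [:1, 1:] = [:1, 1:] * (?X ^ m - 1)"
  proof -
    have "y * z - z = z * (y - 1)" for y z :: "'a poly" by (simp add: algebra_simps)
    then show ?thesis unfolding u_eq .
  qed
  ultimately have "G dvd u - [:1, 1:]" by (simp only: dvd_mult)
  also have "u - [:1, 1:] dvd P - G" by (rule dvd_pcompose_diff)
  finally have "G dvd P - G + G" by (rule dvd_add) simp
  then show ?thesis by simp
qed

lemma degree_P_div_G: "degree (P div G) = n * m"
proof -
  have "degree u = CARD('a) ^ n"
    by (simp add: degree_add_eq_left degree_monom_eq card_power_eq_Suc)
  hence "degree P = n + n * m" by (simp add: degree_pcompose degree_f card_power_eq_Suc)
  hence "P \<noteq> 0" using n_pos by auto
  have P_eq: "G * (P div G) = P" using G_dvd_P by (rule dvd_mult_div_cancel)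
  with \<open>P \<noteq> 0\<close> have "G \<noteq> 0" "P div G \<noteq> 0" by auto
  hence "degree P = degree G + degree (P div G)"
    using degree_mult_eq by (metis P_eq)
  moreover have "degree G = n" by (simp add: degree_pcompose degree_f)
  ultimately show ?thesis using \<open>degree P = n + n * m\<close> by simp
qed

lemma of_nat_m: "of_nat m = (-1 :: 'a)"
proof -
  have "of_nat (CARD('a) ^ n) = (0 :: 'a)"
    using of_nat_card_finite_field[where 'a='a] n_pos by (simp add: power_0_left)
  then show ?thesis by (simp add: card_power_eq_Suc eq_neg_iff_add_eq_0 add.commute)
qed

lemma pderiv_u: "pderiv u = - ([:0, 1:] ^ (m - 1))"
proof -
  have "pderiv u = monom (of_nat (Suc m)) m + monom (of_nat m) (m - 1)"
    by (simp add: pderiv_add pderiv_monom card_power_eq_Suc)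
  also have "\<dots> = - ([:0, 1:] ^ (m - 1))"
    using of_nat_m by (simp add: monom_altdef)
  finally show ?thesis .
qed

lemma squarefree_u_power_m_minus_1: "squarefree (u ^ m - 1)"
proof (rule squarefree_if_coprime_pderiv, rule coprimeI)
  fix c assume c: "c dvd u ^ m - 1" "c dvd pderiv (u ^ m - 1)"
  have "pderiv (u ^ m - 1) = smult (of_nat m) (u ^ (m - 1) * pderiv u)"
    by (simp only: pderiv_diff pderiv_1 pderiv_power diff_zero)
  also have "\<dots> = smult (-1) (u ^ (m - 1) * - ([:0, 1:] ^ (m - 1)))"
    by (simp only: of_nat_m pderiv_u)
  finally have pderiv_eq: "pderiv (u ^ m - 1) = u ^ (m - 1) * [:0, 1:] ^ (m - 1)" by simp
  have "u ^ (m - 1) * [:0, 1:] ^ (m - 1) dvd u ^ (m - 1) * u ^ (m - 1)"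
    by (rule mult_dvd_mono[OF dvd_refl dvd_power_same[OF X_dvd_u]])
  with c(2)[unfolded pderiv_eq] have "c dvd u ^ (m - 1) * u ^ (m - 1)" by (rule dvd_trans)
  hence "c dvd u ^ (m - 1 + (m - 1))" by (simp only: power_add)
  with m_pos c(1) show "is_unit c" by (rule is_unit_if_dvd_power_minus_1_and_power)
qed

lemma squarefree_P: "squarefree P"
proof (rule squarefree_mono[OF _ squarefree_u_power_m_minus_1])
  show "P dvd u ^ m - 1"
    using pcompose_dvd_pcompose[OF f_dvd_X_power_m, of u]
    by (simp add: pcompose_diff pcompose_power pcompose_X pcompose_1)
qed

context
  fixes h :: "'a poly"
  assumes h: "irreducible h" "h dvd P"
begin

lemma prime_elem_factor: "prime_elem h"
  using h(1) by (rule field_poly_irreducible_imp_prime)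

lemma factor_dvd_u_power_m_minus_1: "h dvd u ^ m - 1"
  using h(2) pcompose_dvd_pcompose[OF f_dvd_X_power_m, of u]
  by (simp add: pcompose_diff pcompose_power pcompose_X pcompose_1 dvd_trans)

lemma factor_not_dvd_u: "\<not> h dvd u"
proof
  assume "h dvd u"
  hence "h dvd u ^ m" using m_pos by (simp add: dvd_trans[OF _ dvd_power])
  hence "h dvd u ^ m - (u ^ m - 1)" using factor_dvd_u_power_m_minus_1 by (rule dvd_diff)
  with h(1) show False by (simp add: irreducible_def)
qed

lemma factor_not_dvd_X: "\<not> h dvd [:0, 1:]"
proof
  assume "h dvd [:0, 1:]"
  also note X_dvd_u
  finally show False using factor_not_dvd_u by contradiction
qed

lemma factor_not_dvd_X_plus_1: "\<not> h dvd [:0, 1:] + 1"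
proof
  assume "h dvd [:0, 1:] + 1"
  also note X_plus_1_dvd_u
  finally show False using factor_not_dvd_u by contradiction
qed

lemma cong_u_power_m: "[u ^ m = 1] (mod h)"
  using factor_dvd_u_power_m_minus_1 by (simp add: cong_iff_dvd_diff)

lemma cong_u_power_card_power: "[u ^ CARD('a) ^ n = u] (mod h)"
  using cong_mult[OF cong_refl[of u] cong_u_power_m] by (simp add: card_power_eq_Suc)

lemma not_cong_u_power:
  assumes "0 < k" "k < m"
  shows "\<not> [u ^ k = 1] (mod h)"
proof
  assume "[u ^ k = 1] (mod h)"
  hence "h dvd pcompose ([:0, 1:] ^ k - 1) u"
    by (simp add: cong_iff_dvd_diff pcompose_diff pcompose_power pcompose_X pcompose_1)
  with is_unit_if_dvd_pcompose[OF irreducible_f f_not_dvd_X_power[OF assms] h(2)] h(1)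
  show False by (simp add: irreducible_def)
qed

text \<open>Both \<open>z \<mapsto> z\<^sup>Q\<close> and \<open>z \<mapsto> z\<^bsup>q^degree h\<^esup>\<close> fix \<open>u\<close>, hence so does
  \<open>z \<mapsto> z\<^bsup>q^g\<^esup>\<close> for \<open>g = gcd (degree h) n\<close>; as \<open>u\<close> has order \<open>m\<close>, this forces \<open>g = n\<close>.\<close>
lemma n_dvd_degree_factor: "n dvd degree h"
proof -
  define g where "g = gcd (degree h) n"
  have "[u ^ CARD('a) ^ g = u] (mod h)"
    unfolding g_def using degree_pos_if_irreducible[OF h(1)] poly_cong_power_card_degree[OF h(1)]
    by (intro cong_power_power_gcd cong_u_power_card_power) auto
  have "g \<ge> 1" using n_pos by (simp add: g_def Suc_le_eq)
  hence card_g: "2 \<le> CARD('a) ^ g" by (rule two_le_card_power_finite_field)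
  hence "u * u ^ (CARD('a) ^ g - 1) = u ^ CARD('a) ^ g"
    using power_minus_mult[of "CARD('a) ^ g" u] by (simp add: mult.commute)
  with \<open>[u ^ CARD('a) ^ g = u] (mod h)\<close>
  have "[u * u ^ (CARD('a) ^ g - 1) = u * 1] (mod h)" by simp
  hence u_power: "[u ^ (CARD('a) ^ g - 1) = 1] (mod h)"
    by (rule cong_mult_cancel_prime_elem[OF prime_elem_factor factor_not_dvd_u])
  have "\<not> g < n"
  proof
    assume "g < n"
    hence "CARD('a) ^ g < CARD('a) ^ n"
      using two_le_card_finite_field[where 'a='a] by (intro power_strict_increasing) auto
    hence "CARD('a) ^ g - 1 < m" using card_g by (simp add: card_power_eq_Suc)
    moreover have "0 < CARD('a) ^ g - 1" using card_g by simp
    ultimately show False using not_cong_u_power u_power by blast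
  qed
  moreover have "g \<le> n" using n_pos by (simp add: g_def dvd_imp_le)
  ultimately have "g = n" by simp
  then show ?thesis using gcd_dvd1[of "degree h" n] by (simp add: g_def)
qed

lemma cong_frobenius_twist:
  "[(u - [:0, 1:] - 1) ^ CARD('a) ^ n * [:0, 1:] * u = (u - [:0, 1:] - 1) * [:0, 1:] ^ CARD('a) ^ n] (mod h)"
  (is "[?w ^ ?Q * ?x * u = ?w * ?x ^ ?Q] (mod h)")
proof (rule cong_mult_cancel_prime_elem[OF prime_elem_factor factor_not_dvd_X_plus_1])
  have u_alt: "u = ?x ^ ?Q + ?x ^ m" by (simp add: monom_altdef)
  have identities: "y ^ Suc m + y ^ m - y - 1 = (y + 1) * (y ^ m - 1)"
    "y * (y ^ Suc m + y ^ m) = (y + 1) * y ^ Suc m" for y :: "'a poly"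
    by (simp_all add: algebra_simps)
  have w_eq: "?w = (?x + 1) * (?x ^ m - 1)"
    unfolding u_alt unfolding card_power_eq_Suc by (rule identities(1))
  have xu_eq: "?x * u = (?x + 1) * ?x ^ ?Q"
    unfolding u_alt unfolding card_power_eq_Suc by (rule identities(2))
  have "?w ^ ?Q = u ^ ?Q - ?x ^ ?Q - 1" by (simp add: poly_diff_power_card_power)
  also have "[\<dots> = u - ?x ^ ?Q - 1] (mod h)" by (intro cong_diff cong_u_power_card_power cong_refl)
  also have "u - ?x ^ ?Q - 1 = ?x ^ m - 1" by (simp add: u_alt)
  finally have w_power: "[?w ^ ?Q = ?x ^ m - 1] (mod h)" .
  have "(?x + 1) * (?w ^ ?Q * ?x * u) = ?x * u * ((?x + 1) * ?w ^ ?Q)" by (simp add: mult_ac)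
  also have "[\<dots> = ?x * u * ((?x + 1) * (?x ^ m - 1))] (mod h)"
    by (intro cong_mult cong_refl w_power)
  also have "?x * u * ((?x + 1) * (?x ^ m - 1)) = (?x + 1) * ?x ^ ?Q * ?w"
    by (simp only: w_eq xu_eq)
  finally show "[(?x + 1) * (?w ^ ?Q * ?x * u) = (?x + 1) * (?w * ?x ^ ?Q)] (mod h)"
    by (simp only: mult_ac)
qed

lemma m_dvd_degree_factor:
  assumes "\<not> h dvd G"
  shows "n * m dvd degree h"
proof -
  let ?x = "[:0, 1:] :: 'a poly" and ?w = "u - [:0, 1:] - 1"
  obtain k where k: "degree h = n * k" using n_dvd_degree_factor by (elim dvdE)
  have "\<not> h dvd ?w"
  proof
    assume "h dvd ?w"
    also have "?w = u - [:1, 1:]" by (simp flip: X_plus_1_eq add: diff_diff_eq)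
    also have "\<dots> dvd P - G" by (rule dvd_pcompose_diff)
    finally have "h dvd P - (P - G)" by (rule dvd_diff[OF h(2)])
    with assms show False by simp
  qed
  hence not_dvd: "\<not> h dvd ?w * ?x"
    unfolding prime_elem_dvd_mult_iff[OF prime_elem_factor] using factor_not_dvd_X by blast
  have Q_power: "(CARD('a) ^ n) ^ k = CARD('a) ^ degree h" by (simp add: k power_mult)
  have "[(?w * ?x) * u ^ k = ?w ^ (CARD('a) ^ degree h) * ?x * u ^ k] (mod h)"
    by (intro cong_mult cong_refl cong_sym[OF poly_cong_power_card_degree[OF h(1)]])
  also have "[?w ^ (CARD('a) ^ degree h) * ?x * u ^ k = ?w * ?x ^ (CARD('a) ^ degree h)] (mod h)"
    using cong_twisted_power_iterate[OF prime_elem_factor factor_not_dvd_X cong_u_power_card_power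
        cong_frobenius_twist, of k]
    by (simp only: Q_power)
  also have "[?w * ?x ^ (CARD('a) ^ degree h) = ?w * ?x] (mod h)"
    by (intro cong_mult cong_refl poly_cong_power_card_degree[OF h(1)])
  finally have "[(?w * ?x) * u ^ k = (?w * ?x) * 1] (mod h)" by simp
  then have "[u ^ k = 1] (mod h)"
    by (rule cong_mult_cancel_prime_elem[OF prime_elem_factor not_dvd])
  hence "m dvd k"
    using m_pos cong_u_power_m not_cong_u_power by (intro dvd_if_cong_power_eq_1) auto
  then show ?thesis by (simp add: k)
qed

end

lemma irreducible_P_div_G: "irreducible (P div G)"
proof (rule irreducible_if_irreducible_factors_have_full_degree)
  show "degree (P div G) \<ge> 1" using n_pos m_pos by (simp add: degree_P_div_G)
  fix h assume h: "irreducible h" "h dvd P div G"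
  have P_eq: "G * (P div G) = P" using G_dvd_P by (rule dvd_mult_div_cancel)
  have "h dvd P" using dvd_mult[OF h(2), of G] by (simp only: P_eq)
  moreover have "\<not> h dvd G"
  proof
    assume "h dvd G"
    hence "h * h dvd G * (P div G)" using h(2) by (rule mult_dvd_mono)
    hence "h ^ 2 dvd P" by (simp only: power2_eq_square P_eq)
    hence "is_unit h" by (rule squarefreeD[OF squarefree_P])
    with h(1) show False by (simp add: irreducible_def)
  qed
  ultimately have "n * m dvd degree h" using h(1) by (intro m_dvd_degree_factor)
  moreover have "degree h > 0" using degree_pos_if_irreducible[OF h(1)] by simp
  ultimately show "degree (P div G) \<le> degree h" by (simp only: degree_P_div_G dvd_imp_le)
qed

end

theorem mainTheorem12:
  fixes f :: "'a::{finite,field} poly" and n :: nat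
  defines "q \<equiv> card (UNIV :: 'a set)"
  assumes "n \<ge> 1"
    and "primitive_poly n f"
    and "f \<noteq> [:-1, 1:]"
  shows "pcompose f [:1, 1:] dvd pcompose f (monom 1 (q ^ n) + monom 1 (q ^ n - 1))
    \<and> degree (pcompose f (monom 1 (q ^ n) + monom 1 (q ^ n - 1)) div pcompose f [:1, 1:])
        = n * (q ^ n - 1)
    \<and> irreducible (pcompose f (monom 1 (q ^ n) + monom 1 (q ^ n - 1)) div pcompose f [:1, 1:])"
proof -
  interpret primitive_poly_composition f n "CARD('a) ^ n - 1"
    using assms by unfold_locales
  show ?thesis
    unfolding q_def by (intro conjI G_dvd_P degree_P_div_G irreducible_P_div_G)
qed

end
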